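(* Let $A_1,\dots,A_N$ be $n\times n$ nonnegative matrices that commute pairwise in the max algebra (i.e. $A_r\otimes A_s=A_s\otimes A_r$ for all $r,s$), with $\mu(A_i)\le 1$ for every $1\le i\le N$. Let $p\in\mathbb{N}$ and let $\omega=(\omega_1\,\omega_2\cdots\omega_p)\in\Sigma_N^p$ be a $p$-lettered word in which the letter $i$ occurs $p_i$ times, and let $A_\omega=A_{\omega_p}\otimes A_{\omega_{p-1}}\otimes\cdots\otimes A_{\omega_1}$. Then there exists a positive integer $q$ such that for every $1\le j\le q$ and every $i$, the limit $\widetilde{A_i^{(j)}}:=\lim_{k\to\infty}A_i^{kq+j}$ exists, and \[ \lim_{k\to\infty} A_\omega^{kq+j} \;=\; \bigotimes_{i=1}^{N}\left(\widetilde{A_i^{(j)}}\right)^{p_i}. \]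
   Context: Max algebra: on $\mathbb{R}_+=[0,\infty)$, $a\oplus b=\max\{a,b\}$, $a\otimes b=ab$; for nonnegative matrices $(A\otimes B)_{ij}=\max_k a_{ik}b_{kj}$, and all matrix powers and products are taken with respect to $\otimes$ (with $A^0=I$). Limits are entrywise. $\mu(A)$ denotes the maximum circuit geometric mean of $A$: in the digraph with an edge $i\to j$ of weight $a_{ij}$ whenever $a_{ij}>0$, the circuit geometric mean of a simple circuit $(i_1,i_2),\dots,(i_\ell,i_1)$ is $(a_{i_1i_2}\cdots a_{i_\ell i_1})^{1/\ell}$, and $\mu(A)$ is the maximum of these. $\Sigma_N^p=\{(\omega_1\cdots\omega_p):1\le\omega_i\le N\}$ is the set of $p$-lettered words on $\{1,\dots,N\}$. *)

theory Defs
  imports "HOL-Analysis.Analysis"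
begin

type_synonym 'n mat = "'n \<Rightarrow> 'n \<Rightarrow> real"

definition nonneg_mat :: "('n::finite) mat \<Rightarrow> bool" where
  "nonneg_mat A \<longleftrightarrow> (\<forall>a b. 0 \<le> A a b)"

definition mmult :: "('n::finite) mat \<Rightarrow> 'n mat \<Rightarrow> 'n mat" (infixl "\<otimes>\<^sub>m" 70) where
  "A \<otimes>\<^sub>m B = (\<lambda>i j. Max (range (\<lambda>k. A i k * B k j)))"

definition mone :: "('n::finite) mat" where
  "mone = (\<lambda>i j. if i = j then 1 else 0)"

primrec mpow :: "('n::finite) mat \<Rightarrow> nat \<Rightarrow> 'n mat" where
  "mpow A 0 = mone"
| "mpow A (Suc k) = mpow A k \<otimes>\<^sub>m A"

definition circuits :: "('n::finite) mat \<Rightarrow> 'n list set" where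
  "circuits A = {xs. xs \<noteq> [] \<and> distinct xs \<and>
     (\<forall>k < length xs. 0 < A (xs ! k) (xs ! ((k + 1) mod length xs)))}"

definition cgm :: "('n::finite) mat \<Rightarrow> 'n list \<Rightarrow> real" where
  "cgm A xs = root (length xs) (\<Prod>k<length xs. A (xs ! k) (xs ! ((k + 1) mod length xs)))"

text \<open>Maximum circuit geometric mean (0 if the digraph has no circuit).\<close>
definition mcgm :: "('n::finite) mat \<Rightarrow> real" where
  "mcgm A = Max (insert 0 (cgm A ` circuits A))"

text \<open>A_omega = A_{w_p} \<otimes> ... \<otimes> A_{w_1} for the word w = [w_1, ..., w_p].\<close>
primrec word_mat :: "(nat \<Rightarrow> ('n::finite) mat) \<Rightarrow> nat list \<Rightarrow> 'n mat" where
  "word_mat A [] = mone"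
| "word_mat A (x # xs) = word_mat A xs \<otimes>\<^sub>m A x"

definition mprod_list :: "('n::finite) mat list \<Rightarrow> 'n mat" where
  "mprod_list Ms = foldl (\<otimes>\<^sub>m) mone Ms"

definition mconv :: "(nat \<Rightarrow> ('n::finite) mat) \<Rightarrow> 'n mat \<Rightarrow> bool" where
  "mconv M L \<longleftrightarrow> (\<forall>a b. (\<lambda>k. M k a b) \<longlonglongrightarrow> L a b)"

end

theory Submission
  imports Defs
begin

text \<open>Entries of A^m are maximal weights of walks of length m. Cutting simple circuits, of
weight at most mu(A)^length, out of a walk leaves fewer than n steps, so A^m stays bounded when
mu(A) <= 1 and tends to 0 when mu(A) < 1. Deleting the rows and columns of the critical nodes
(those on a closed walk of length at most n and weight at least 1) leaves a matrix with mu < 1.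
Hence an entry of A^m is either dominated by a vanishing entry of that matrix or realised by a
walk through a critical node c, and such a walk can be lengthened by any multiple of q = n!
through loops at c without losing weight. Along each residue class m = k q + j the entries are
therefore bounded and nondecreasing from the first non-negligible one on, so they converge.
Commutativity rewrites (A_omega)^m as the product of the (A_i^m)^(p_i), and the max-product is
continuous.\<close>

section \<open>Max-algebra matrix products\<close>

lemma mmult_ge: "X a k * Y k b \<le> (X \<otimes>\<^sub>m Y) a b"
  unfolding mmult_def by (rule Max_ge) auto

lemma mmult_attained: "\<exists>k. (X \<otimes>\<^sub>m Y) a b = X a k * Y k b"
proof -
  have "Max (range (\<lambda>k. X a k * Y k b)) \<in> range (\<lambda>k. X a k * Y k b)"
    by (rule Max_in) auto
  then obtain k where "Max (range (\<lambda>k. X a k * Y k b)) = X a k * Y k b" by blast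
  then show ?thesis unfolding mmult_def by blast
qed

lemma mmult_le: "(\<And>k. X a k * Y k b \<le> c) \<Longrightarrow> (X \<otimes>\<^sub>m Y) a b \<le> c"
  using mmult_attained by metis

lemma nonneg_mat_mmult: "nonneg_mat X \<Longrightarrow> nonneg_mat Y \<Longrightarrow> nonneg_mat (X \<otimes>\<^sub>m Y)"
  unfolding nonneg_mat_def by (meson mmult_ge mult_nonneg_nonneg order_trans)

lemma nonneg_mat_mone: "nonneg_mat mone"
  unfolding nonneg_mat_def mone_def by auto

lemma nonneg_mat_mpow: "nonneg_mat X \<Longrightarrow> nonneg_mat (mpow X m)"
  by (induction m) (auto intro: nonneg_mat_mmult nonneg_mat_mone)

lemma mpow_nonneg: "nonneg_mat X \<Longrightarrow> 0 \<le> mpow X m a b"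
  using nonneg_mat_mpow unfolding nonneg_mat_def by blast

lemma mmult_assoc:
  assumes X: "nonneg_mat X" and Z: "nonneg_mat Z"
  shows "(X \<otimes>\<^sub>m Y) \<otimes>\<^sub>m Z = X \<otimes>\<^sub>m (Y \<otimes>\<^sub>m Z)"
proof (intro ext antisym)
  fix a b
  show "((X \<otimes>\<^sub>m Y) \<otimes>\<^sub>m Z) a b \<le> (X \<otimes>\<^sub>m (Y \<otimes>\<^sub>m Z)) a b"
  proof (rule mmult_le)
    fix k
    obtain l where l: "(X \<otimes>\<^sub>m Y) a k = X a l * Y l k" using mmult_attained by metis
    have "X a l * (Y l k * Z k b) \<le> X a l * (Y \<otimes>\<^sub>m Z) l b"
      using X mmult_ge unfolding nonneg_mat_def by (metis mult_left_mono)
    also have "\<dots> \<le> (X \<otimes>\<^sub>m (Y \<otimes>\<^sub>m Z)) a b" by (rule mmult_ge)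
    finally show "(X \<otimes>\<^sub>m Y) a k * Z k b \<le> (X \<otimes>\<^sub>m (Y \<otimes>\<^sub>m Z)) a b"
      by (simp add: l mult.assoc)
  qed
  show "(X \<otimes>\<^sub>m (Y \<otimes>\<^sub>m Z)) a b \<le> ((X \<otimes>\<^sub>m Y) \<otimes>\<^sub>m Z) a b"
  proof (rule mmult_le)
    fix k
    obtain l where l: "(Y \<otimes>\<^sub>m Z) k b = Y k l * Z l b" using mmult_attained by metis
    have "X a k * Y k l * Z l b \<le> (X \<otimes>\<^sub>m Y) a l * Z l b"
      using Z mmult_ge unfolding nonneg_mat_def by (metis mult_right_mono)
    also have "\<dots> \<le> ((X \<otimes>\<^sub>m Y) \<otimes>\<^sub>m Z) a b" by (rule mmult_ge)
    finally show "X a k * (Y \<otimes>\<^sub>m Z) k b \<le> ((X \<otimes>\<^sub>m Y) \<otimes>\<^sub>m Z) a b"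
      by (simp add: l mult.assoc)
  qed
qed

lemma mone_mmult: assumes "nonneg_mat X" shows "mone \<otimes>\<^sub>m X = X"
proof (intro ext antisym)
  fix a b
  show "(mone \<otimes>\<^sub>m X) a b \<le> X a b"
    by (rule mmult_le) (use assms in \<open>auto simp: mone_def nonneg_mat_def\<close>)
  show "X a b \<le> (mone \<otimes>\<^sub>m X) a b" using mmult_ge[of mone a a X b] by (simp add: mone_def)
qed

lemma mmult_mone: assumes "nonneg_mat X" shows "X \<otimes>\<^sub>m mone = X"
proof (intro ext antisym)
  fix a b
  show "(X \<otimes>\<^sub>m mone) a b \<le> X a b"
    by (rule mmult_le) (use assms in \<open>auto simp: mone_def nonneg_mat_def\<close>)
  show "X a b \<le> (X \<otimes>\<^sub>m mone) a b" using mmult_ge[of X a b mone b] by (simp add: mone_def)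
qed

lemma mpow_1: "nonneg_mat X \<Longrightarrow> mpow X 1 = X"
  by (simp add: mone_mmult)

lemma mpow_add: assumes "nonneg_mat X" shows "mpow X (m + k) = mpow X m \<otimes>\<^sub>m mpow X k"
proof (induction k)
  case 0 then show ?case using mmult_mone[OF nonneg_mat_mpow[OF assms]] by simp
next
  case (Suc k) then show ?case using mmult_assoc[OF nonneg_mat_mpow[OF assms] assms] by simp
qed

lemma mpow_mult: assumes "nonneg_mat X" shows "mpow X (m * k) = mpow (mpow X m) k"
proof (induction k)
  case 0 then show ?case by simp
next
  case (Suc k)
  have "mpow X (m * Suc k) = mpow X (m * k + m)" by (simp add: algebra_simps)
  then show ?case using Suc mpow_add[OF assms] by simp
qed

lemma one_le_mpow_diag:
  assumes X: "nonneg_mat X" and c: "1 \<le> X c c"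
  shows "1 \<le> mpow X k c c"
proof (induction k)
  case 0 then show ?case by (simp add: mone_def)
next
  case (Suc k)
  have "1 * 1 \<le> mpow X k c c * X c c" by (rule mult_mono) (use Suc c in auto)
  also have "\<dots> \<le> mpow X (Suc k) c c" by (simp add: mmult_ge)
  finally show ?case by simp
qed

section \<open>Walks and circuits\<close>

definition walk_weight :: "('n::finite) mat \<Rightarrow> (nat \<Rightarrow> 'n) \<Rightarrow> nat \<Rightarrow> real" where
  "walk_weight B f m = (\<Prod>k<m. B (f k) (f (Suc k)))"

lemma walk_weight_nonneg: "nonneg_mat B \<Longrightarrow> 0 \<le> walk_weight B f m"
  unfolding walk_weight_def nonneg_mat_def by (simp add: prod_nonneg)

lemma walk_weight_le_mpow:
  assumes "nonneg_mat B" shows "walk_weight B f m \<le> mpow B m (f 0) (f m)"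
proof (induction m)
  case 0 then show ?case by (simp add: walk_weight_def mone_def)
next
  case (Suc m)
  have "walk_weight B f (Suc m) = walk_weight B f m * B (f m) (f (Suc m))"
    by (simp add: walk_weight_def)
  also have "\<dots> \<le> mpow B m (f 0) (f m) * B (f m) (f (Suc m))"
    using Suc assms unfolding nonneg_mat_def by (simp add: mult_right_mono)
  also have "\<dots> \<le> mpow B (Suc m) (f 0) (f (Suc m))" by (simp add: mmult_ge)
  finally show ?case .
qed

lemma mpow_attained_by_walk:
  "mpow B m a b = 0 \<or> (\<exists>f. f 0 = a \<and> f m = b \<and> mpow B m a b = walk_weight B f m)"
proof (induction m arbitrary: b)
  case 0 then show ?case
    by (cases "a = b") (auto simp: mone_def walk_weight_def intro: exI[of _ "\<lambda>_. a"])
next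
  case (Suc m)
  obtain d where d: "mpow B (Suc m) a b = mpow B m a d * B d b"
    using mmult_attained[of "mpow B m" B a b] by auto
  from Suc.IH[of d] show ?case
  proof
    assume "\<exists>f. f 0 = a \<and> f m = d \<and> mpow B m a d = walk_weight B f m"
    then obtain f where f: "f 0 = a" "f m = d" "mpow B m a d = walk_weight B f m" by blast
    have "walk_weight B (f(Suc m := b)) m = walk_weight B f m"
      unfolding walk_weight_def by (intro prod.cong) auto
    then have "mpow B (Suc m) a b = walk_weight B (f(Suc m := b)) (Suc m)"
      using d f by (simp add: walk_weight_def)
    moreover have "(f(Suc m := b)) 0 = a" "(f(Suc m := b)) (Suc m) = b" using f by auto
    ultimately show ?case by blast
  qed (use d in simp)
qed

definition circuit_weight :: "('n::finite) mat \<Rightarrow> 'n list \<Rightarrow> real" where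
  "circuit_weight A xs = (\<Prod>k<length xs. A (xs ! k) (xs ! ((k + 1) mod length xs)))"

lemma circuit_weight_eq_walk_weight:
  assumes "xs \<noteq> []"
  shows "circuit_weight A xs = walk_weight A (\<lambda>k. xs ! (k mod length xs)) (length xs)"
  unfolding circuit_weight_def walk_weight_def by (rule prod.cong) (auto simp: mod_Suc)

lemma circuit_weight_eq_cgm_pow:
  assumes "nonneg_mat A" and "xs \<in> circuits A"
  shows "circuit_weight A xs = cgm A xs ^ length xs"
proof -
  have "0 \<le> circuit_weight A xs"
    using assms(1) unfolding circuit_weight_def nonneg_mat_def by (simp add: prod_nonneg)
  moreover have "0 < length xs" using assms(2) unfolding circuits_def by auto
  ultimately show ?thesis
    unfolding cgm_def circuit_weight_def[symmetric] by (simp add: real_root_pow_pos2)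
qed

lemma length_circuit_le_card:
  fixes B :: "('n::finite) mat"
  assumes "xs \<in> circuits B"
  shows "length xs \<le> CARD('n)"
proof -
  have "length xs = card (set xs)" using assms by (simp add: circuits_def distinct_card)
  also have "\<dots> \<le> CARD('n)" by (rule card_mono) auto
  finally show ?thesis .
qed

lemma finite_circuits: "finite (circuits (B::('n::finite) mat))"
proof (rule finite_subset)
  show "circuits B \<subseteq> {xs. set xs \<subseteq> UNIV \<and> length xs \<le> CARD('n)}"
    using length_circuit_le_card by blast
qed (rule finite_lists_length_le, simp)

lemma cgm_le_mcgm: "xs \<in> circuits B \<Longrightarrow> cgm B xs \<le> mcgm B"
  unfolding mcgm_def by (rule Max_ge) (auto simp: finite_circuits)

lemma mcgm_nonneg: "0 \<le> mcgm B"
  unfolding mcgm_def by (rule Max_ge) (auto simp: finite_circuits)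

lemma circuit_weight_le_mcgm_pow:
  assumes "nonneg_mat B" and xs: "xs \<in> circuits B"
  shows "circuit_weight B xs \<le> mcgm B ^ length xs"
proof -
  have "0 \<le> cgm B xs" unfolding cgm_def using assms(1)
    by (simp add: nonneg_mat_def prod_nonneg real_root_ge_zero)
  then show ?thesis using circuit_weight_eq_cgm_pow[OF assms] cgm_le_mcgm[OF xs]
    by (simp add: power_mono)
qed

lemma walk_has_simple_loop:
  fixes f :: "nat \<Rightarrow> 'n::finite"
  assumes "CARD('n) \<le> m"
  shows "\<exists>i l. 0 < l \<and> i + l \<le> m \<and> f i = f (i + l) \<and> inj_on (\<lambda>k. f (i + k)) {..<l}"
proof -
  define P where "P j \<longleftrightarrow> (\<exists>i<j. f i = f j)" for j
  have "\<not> inj_on f {..CARD('n)}"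
  proof
    assume "inj_on f {..CARD('n)}"
    then have "card (f ` {..CARD('n)}) = Suc CARD('n)" by (simp add: card_image)
    moreover have "card (f ` {..CARD('n)}) \<le> CARD('n)" by (rule card_mono) auto
    ultimately show False by simp
  qed
  then obtain j0 where "j0 \<le> CARD('n)" "P j0"
    unfolding inj_on_def P_def by (metis atMost_iff linorder_neqE_nat)
  define j where "j = (LEAST j. P j)"
  have "P j" "j \<le> m" using \<open>P j0\<close> \<open>j0 \<le> CARD('n)\<close> assms Least_le[of P j0]
    by (auto simp: j_def intro: LeastI)
  then obtain i where "i < j" "f i = f j" unfolding P_def by blast
  have inj: "inj_on f {..<j}"
  proof (rule inj_onI)
    fix x y assume "x \<in> {..<j}" "y \<in> {..<j}" "f x = f y"
    then show "x = y"
      using not_less_Least[of x P] not_less_Least[of y P]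
      by (metis P_def j_def lessThan_iff linorder_neqE_nat)
  qed
  have "inj_on (\<lambda>k. f (i + k)) {..<j - i}"
  proof (rule inj_onI)
    fix x y assume "x \<in> {..<j - i}" "y \<in> {..<j - i}" "f (i + x) = f (i + y)"
    then have "i + x = i + y" by (intro inj_onD[OF inj]) auto
    then show "x = y" by simp
  qed
  then show ?thesis using \<open>i < j\<close> \<open>f i = f j\<close> \<open>j \<le> m\<close>
    by (intro exI[of _ i] exI[of _ "j - i"]) auto
qed

lemma simple_closed_walk_weight_le:
  assumes B: "nonneg_mat B" and l: "0 < l" and closed: "f 0 = f l"
    and simple: "inj_on f {..<l}"
  shows "walk_weight B f l \<le> mcgm B ^ l"
proof (cases "\<forall>k<l. 0 < B (f k) (f (Suc k))")
  case True
  define xs where "xs = map f [0..<l]"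
  have len: "length xs = l" by (simp add: xs_def)
  have nth: "xs ! k = f k" and wrap: "f (Suc k mod l) = f (Suc k)" if "k < l" for k
    using that closed by (auto simp: xs_def mod_Suc)
  have "xs \<noteq> []" using l len by auto
  have "xs \<in> circuits B"
    unfolding circuits_def
  proof (intro CollectI conjI allI impI)
    show "xs \<noteq> []" by fact
    show "distinct xs" using simple by (simp add: xs_def distinct_map atLeast0LessThan)
    fix k assume "k < length xs"
    then show "0 < B (xs ! k) (xs ! ((k + 1) mod length xs))"
      using True l by (simp add: len nth wrap)
  qed
  moreover have "walk_weight B f l = circuit_weight B xs"
    unfolding circuit_weight_eq_walk_weight[OF \<open>xs \<noteq> []\<close>] walk_weight_def
    using l by (intro prod.cong) (simp_all add: len nth wrap)
  ultimately show ?thesis using circuit_weight_le_mcgm_pow[OF B] len by metis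
next
  case False
  then obtain k where "k < l" "\<not> 0 < B (f k) (f (Suc k))" by blast
  then have "k < l" "B (f k) (f (Suc k)) = 0"
    using B unfolding nonneg_mat_def by (auto simp: not_less intro: antisym)
  then have "walk_weight B f l = 0" unfolding walk_weight_def by (auto intro: prod_zero)
  then show ?thesis by (simp add: mcgm_nonneg)
qed

lemma walk_weight_remove_loop:
  assumes "i + l \<le> m" and "f i = f (i + l)"
  shows "walk_weight B f m =
    walk_weight B (\<lambda>k. f (i + k)) l * walk_weight B (\<lambda>k. if k \<le> i then f k else f (k + l)) (m - l)"
proof -
  define h where "h k = B (f k) (f (Suc k))" for k
  define g where "g = (\<lambda>k. if k \<le> i then f k else f (k + l))"
  have g_shift: "g k = f (k + l)" if "i \<le> k" for k
    using that assms(2) by (auto simp: g_def)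
  have "walk_weight B f m = prod h {0..<i} * prod h {i..<i + l} * prod h {i + l..<m}"
    unfolding walk_weight_def h_def[symmetric] using assms(1)
    by (simp add: atLeast0LessThan[symmetric] prod.atLeastLessThan_concat)
  also have "prod h {i..<i + l} = walk_weight B (\<lambda>k. f (i + k)) l"
    unfolding walk_weight_def h_def using prod.shift_bounds_nat_ivl[of _ 0 i l]
    by (simp add: atLeast0LessThan add.commute)
  also have "prod h {0..<i} * prod h {i + l..<m} = walk_weight B g (m - l)"
  proof -
    have "prod h {0..<i} = (\<Prod>k\<in>{0..<i}. B (g k) (g (Suc k)))"
      by (rule prod.cong) (auto simp: g_def h_def)
    moreover have "prod h {i + l..<m} = (\<Prod>k\<in>{i..<m - l}. B (g k) (g (Suc k)))"
      using prod.shift_bounds_nat_ivl[of h i l "m - l"] assms(1)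
      by (simp add: g_shift h_def)
    ultimately show ?thesis
      unfolding walk_weight_def using assms(1)
      by (simp add: atLeast0LessThan[symmetric] prod.atLeastLessThan_concat)
  qed
  ultimately show ?thesis unfolding g_def by (simp add: mult.commute mult.left_commute)
qed

lemma walk_weight_le:
  fixes B :: "('n::finite) mat"
  assumes B: "nonneg_mat B" and M: "\<forall>a b. B a b \<le> M" "1 \<le> M"
  shows "\<exists>r<CARD('n). r \<le> m \<and> walk_weight B f m \<le> M ^ r * mcgm B ^ (m - r)"
proof (induction m arbitrary: f rule: less_induct)
  case (less m)
  show ?case
  proof (cases "m < CARD('n)")
    case True
    have "walk_weight B f m \<le> (\<Prod>k<m. M)" unfolding walk_weight_def
      by (rule prod_mono) (use B M in \<open>auto simp: nonneg_mat_def\<close>)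
    then show ?thesis using True by auto
  next
    case False
    then obtain i l where loop: "0 < l" "i + l \<le> m" "f i = f (i + l)"
      "inj_on (\<lambda>k. f (i + k)) {..<l}"
      using walk_has_simple_loop[of m f] by auto
    define g where "g = (\<lambda>k. if k \<le> i then f k else f (k + l))"
    obtain r where r: "r < CARD('n)" "r \<le> m - l"
      "walk_weight B g (m - l) \<le> M ^ r * mcgm B ^ (m - l - r)"
      using less.IH[of "m - l" g] loop by auto
    have "walk_weight B f m = walk_weight B (\<lambda>k. f (i + k)) l * walk_weight B g (m - l)"
      unfolding g_def using loop by (intro walk_weight_remove_loop)
    also have "\<dots> \<le> mcgm B ^ l * (M ^ r * mcgm B ^ (m - l - r))"
      using simple_closed_walk_weight_le[OF B, of l "\<lambda>k. f (i + k)"] loop r(3)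
      by (intro mult_mono) (auto simp: walk_weight_nonneg[OF B] mcgm_nonneg)
    also have "\<dots> = M ^ r * mcgm B ^ (m - r)"
      using r(2) loop(2) by (simp add: power_add[symmetric] mult.left_commute)
    finally show ?thesis using r loop by auto
  qed
qed

lemma mat_entry_bound: "\<exists>M. 1 \<le> M \<and> (\<forall>a b. (B::('n::finite) mat) a b \<le> M)"
proof -
  define M where "M = max 1 (Max (range (case_prod B)))"
  have "B a b \<le> Max (range (case_prod B))" for a b
    by (rule Max_ge) (auto intro: image_eqI[of _ _ "(a, b)"])
  then have "B a b \<le> M" for a b
    by (simp add: M_def le_max_iff_disj)
  moreover have "1 \<le> M" by (simp add: M_def)
  ultimately show ?thesis by blast
qed

lemma mpow_le:
  fixes B :: "('n::finite) mat"
  assumes B: "nonneg_mat B" and M: "\<forall>a b. B a b \<le> M" "1 \<le> M"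
  shows "\<exists>r<CARD('n). r \<le> m \<and> mpow B m a b \<le> M ^ r * mcgm B ^ (m - r)"
  using mpow_attained_by_walk[of B m a b]
proof
  assume "mpow B m a b = 0"
  then show ?thesis by (auto simp: mcgm_nonneg intro: exI[of _ 0])
qed (use walk_weight_le[OF B M, of m] in metis)

lemma mpow_bounded:
  fixes B :: "('n::finite) mat"
  assumes B: "nonneg_mat B" and M: "\<forall>a b. B a b \<le> M" "1 \<le> M" and mu: "mcgm B \<le> 1"
  shows "mpow B m a b \<le> M ^ CARD('n)"
proof -
  obtain r where r: "r < CARD('n)" and le: "mpow B m a b \<le> M ^ r * mcgm B ^ (m - r)"
    using mpow_le[OF B M] by blast
  note le
  also have "\<dots> \<le> M ^ r"
    using M by (intro mult_left_le power_le_one mcgm_nonneg mu) auto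
  also have "\<dots> \<le> M ^ CARD('n)" using M r by (simp add: power_increasing)
  finally show ?thesis .
qed

lemma mpow_tendsto_zero:
  fixes B :: "('n::finite) mat"
  assumes B: "nonneg_mat B" and mu: "mcgm B < 1"
  shows "(\<lambda>m. mpow B m a b) \<longlonglongrightarrow> 0"
proof -
  obtain M where M: "1 \<le> M" "\<forall>a b. B a b \<le> M" using mat_entry_bound by blast
  have "mpow B (m + CARD('n)) a b \<le> M ^ CARD('n) * mcgm B ^ m" for m
  proof -
    obtain r where r: "r < CARD('n)"
      and le: "mpow B (m + CARD('n)) a b \<le> M ^ r * mcgm B ^ (m + CARD('n) - r)"
      using mpow_le[OF B M(2,1)] by blast
    note le
    also have "\<dots> \<le> M ^ CARD('n) * mcgm B ^ m"
      using M mu r mcgm_nonneg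
      by (intro mult_mono power_increasing power_decreasing) auto
    finally show ?thesis .
  qed
  then have upper: "\<forall>\<^sub>F m in sequentially. mpow B (m + CARD('n)) a b \<le> M ^ CARD('n) * mcgm B ^ m"
    by simp
  have lower: "\<forall>\<^sub>F m in sequentially. 0 \<le> mpow B (m + CARD('n)) a b"
    by (simp add: mpow_nonneg[OF B])
  have "(\<lambda>m. M ^ CARD('n) * mcgm B ^ m) \<longlonglongrightarrow> 0"
    using mu mcgm_nonneg[of B] by (intro tendsto_mult_right_zero LIMSEQ_power_zero) simp
  then have "(\<lambda>m. mpow B (m + CARD('n)) a b) \<longlonglongrightarrow> 0"
    by (rule tendsto_sandwich[OF lower upper tendsto_const])
  then show ?thesis by (rule LIMSEQ_offset)
qed

section \<open>Critical nodes\<close>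

text \<open>When mu(A) <= 1 these are exactly the nodes on circuits of geometric mean 1; the
argument only needs this closed-walk form.\<close>

definition critical :: "('n::finite) mat \<Rightarrow> 'n \<Rightarrow> bool" where
  "critical A c \<longleftrightarrow> (\<exists>l\<in>{1..CARD('n)}. 1 \<le> mpow A l c c)"

definition drop_critical :: "('n::finite) mat \<Rightarrow> 'n mat" where
  "drop_critical A = (\<lambda>a b. if critical A a \<or> critical A b then 0 else A a b)"

lemma nonneg_mat_drop_critical: "nonneg_mat A \<Longrightarrow> nonneg_mat (drop_critical A)"
  unfolding nonneg_mat_def drop_critical_def by auto

lemma mcgm_drop_critical_less_1:
  fixes A :: "('n::finite) mat"
  assumes A: "nonneg_mat A" and mu: "mcgm A \<le> 1"
  shows "mcgm (drop_critical A) < 1"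
proof -
  have "cgm (drop_critical A) xs < 1" if xs: "xs \<in> circuits (drop_critical A)" for xs
  proof -
    let ?l = "length xs"
    have edge: "\<not> critical A (xs ! k) \<and> drop_critical A (xs ! k) (xs ! ((k + 1) mod ?l)) =
        A (xs ! k) (xs ! ((k + 1) mod ?l))" if "k < ?l" for k
      using xs that unfolding circuits_def drop_critical_def by (auto split: if_splits)
    then have xsA: "xs \<in> circuits A"
      using xs unfolding circuits_def by auto
    have l: "0 < ?l" "?l \<le> CARD('n)"
      using xs length_circuit_le_card[OF xsA] by (simp_all add: circuits_def)
    have eq: "cgm (drop_critical A) xs = cgm A xs"
      unfolding cgm_def using edge by (metis (no_types, lifting) lessThan_iff prod.cong)
    have "cgm A xs \<noteq> 1"
    proof
      assume "cgm A xs = 1"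
      then have "circuit_weight A xs = 1" by (simp add: circuit_weight_eq_cgm_pow[OF A xsA])
      then have "1 \<le> mpow A ?l (xs ! 0) (xs ! 0)"
        using walk_weight_le_mpow[OF A, of "\<lambda>k. xs ! (k mod ?l)" ?l] l
        by (simp add: circuit_weight_eq_walk_weight)
      then have "critical A (xs ! 0)"
        unfolding critical_def using l by (intro bexI[of _ ?l]) (simp_all add: Suc_le_eq)
      then show False using edge[OF l(1)] by simp
    qed
    then show ?thesis using eq cgm_le_mcgm[OF xsA] mu by simp
  qed
  then show ?thesis unfolding mcgm_def by (simp add: finite_circuits)
qed

lemma mpow_le_drop_critical_or_via_critical:
  assumes A: "nonneg_mat A"
  shows "mpow A m a b \<le> mpow (drop_critical A) m a b \<or>
    (\<exists>c t. critical A c \<and> t \<le> m \<and> mpow A m a b \<le> mpow A t a c * mpow A (m - t) c b)"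
proof (induction m arbitrary: b)
  case 0 then show ?case by simp
next
  case (Suc m)
  obtain d where d: "mpow A (Suc m) a b = mpow A m a d * A d b"
    using mmult_attained[of "mpow A m" A a b] by auto
  have Adb: "0 \<le> A d b" using A unfolding nonneg_mat_def by auto
  consider (drop) "mpow A m a d \<le> mpow (drop_critical A) m a d"
      and "\<not> critical A d" and "\<not> critical A b"
    | (at_d) "critical A d" | (at_b) "critical A b"
    | (earlier) c t where "critical A c" "t \<le> m"
        "mpow A m a d \<le> mpow A t a c * mpow A (m - t) c d"
    using Suc.IH[of d] by blast
  then show ?case
  proof cases
    case drop
    then have "mpow A (Suc m) a b \<le> mpow (drop_critical A) m a d * drop_critical A d b"
      using d Adb by (simp add: drop_critical_def mult_right_mono)
    also have "\<dots> \<le> mpow (drop_critical A) (Suc m) a b" by (simp add: mmult_ge)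
    finally show ?thesis ..
  next
    case at_d
    then show ?thesis using d mpow_1[OF A]
      by (intro disjI2 exI[of _ d] exI[of _ m]) simp
  next
    case at_b
    then show ?thesis
      by (intro disjI2 exI[of _ b] exI[of _ "Suc m"]) (simp add: mone_def)
  next
    case earlier
    have "mpow A (Suc m) a b \<le> mpow A t a c * (mpow A (m - t) c d * A d b)"
      using mult_right_mono[OF earlier(3) Adb] d by (simp add: mult.assoc)
    also have "\<dots> \<le> mpow A t a c * mpow A (Suc m - t) c b"
      using earlier(2) mmult_ge[of "mpow A (m - t)" c d A b]
      by (simp add: Suc_diff_le mult_left_mono mpow_nonneg[OF A])
    finally show ?thesis using earlier by (intro disjI2 exI[of _ c] exI[of _ t]) simp
  qed
qed

lemma mpow_critical_detour:
  fixes A :: "('n::finite) mat"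
  assumes A: "nonneg_mat A" and c: "critical A c" and D: "\<forall>l\<in>{1..CARD('n)}. l dvd D"
  shows "mpow A t a c * mpow A s c b \<le> mpow A (t + D + s) a b"
proof -
  obtain l where l: "l \<in> {1..CARD('n)}" "1 \<le> mpow A l c c"
    using c unfolding critical_def by blast
  obtain r where "D = l * r" using D l(1) by (meson dvdE)
  then have "1 \<le> mpow A D c c"
    using one_le_mpow_diag[OF nonneg_mat_mpow[OF A] l(2)] by (simp add: mpow_mult[OF A])
  then have "mpow A s c b \<le> mpow A D c c * mpow A s c b"
    using mpow_nonneg[OF A, of s c b] by (simp add: mult_le_cancel_right1)
  also have "\<dots> \<le> (mpow A D \<otimes>\<^sub>m mpow A s) c b" by (rule mmult_ge)
  finally have "mpow A t a c * mpow A s c b \<le> mpow A t a c * (mpow A D \<otimes>\<^sub>m mpow A s) c b"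
    by (simp add: mult_left_mono mpow_nonneg[OF A])
  also have "\<dots> \<le> (mpow A t \<otimes>\<^sub>m (mpow A D \<otimes>\<^sub>m mpow A s)) a b" by (rule mmult_ge)
  also have "\<dots> = mpow A (t + (D + s)) a b" by (simp only: mpow_add[OF A])
  finally show ?thesis by (simp add: add.assoc)
qed

lemma convergent_if_mono_above_null:
  fixes v e :: "nat \<Rightarrow> real"
  assumes "Bseq v" and v: "\<And>k. 0 \<le> v k" and e: "\<And>k. 0 \<le> e k" "e \<longlonglongrightarrow> 0"
    and mono: "\<And>k k'. e k < v k \<Longrightarrow> k \<le> k' \<Longrightarrow> v k \<le> v k'"
  shows "convergent v"
proof (cases "\<exists>k0. e k0 < v k0")
  case False
  then have "v \<longlonglongrightarrow> 0"
    by (intro tendsto_sandwich[OF _ _ tendsto_const e(2)]) (auto simp: v not_less)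
  then show ?thesis by (auto simp: convergent_def)
next
  case True
  then obtain k0 where k0: "e k0 < v k0" by blast
  then have "0 < v k0" using e(1)[of k0] by linarith
  then obtain K where K: "\<And>k. K \<le> k \<Longrightarrow> e k < v k0"
    using order_tendstoD(2)[OF e(2)] by (auto simp: eventually_sequentially)
  have "v m \<le> v n" if "max k0 K \<le> m" "m \<le> n" for m n
  proof (rule mono)
    show "e m < v m" using K[of m] mono[OF k0, of m] that by auto
  qed (fact that(2))
  then show ?thesis
    using \<open>Bseq v\<close> by (intro Bseq_monoseq_convergent'_inc[of v "max k0 K"])
      (auto simp: Bseq_ignore_initial_segment)
qed

lemma mpow_arith_progression_convergent:
  fixes A :: "('n::finite) mat"
  assumes A: "nonneg_mat A" and mu: "mcgm A \<le> 1"
    and q: "0 < q" and dvd: "\<forall>l\<in>{1..CARD('n)}. l dvd q"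
  shows "convergent (\<lambda>k. mpow A (k * q + j) a b)"
proof -
  define v where "v k = mpow A (k * q + j) a b" for k
  define e where "e k = mpow (drop_critical A) (k * q + j) a b" for k
  have "strict_mono (\<lambda>k. k * q + j)" using q by (intro strict_monoI) simp
  then have "e \<longlonglongrightarrow> 0"
    using LIMSEQ_subseq_LIMSEQ[OF mpow_tendsto_zero[OF nonneg_mat_drop_critical[OF A]
        mcgm_drop_critical_less_1[OF A mu]]]
    unfolding e_def[abs_def] by (simp add: o_def)
  moreover have "v k \<le> v k'" if "e k < v k" "k \<le> k'" for k k'
  proof -
    txt \<open>The optimal walk passes through a critical node, where the (k' - k) q extra steps
      are spent on loops.\<close>
    obtain c t where c: "critical A c" and t: "t \<le> k * q + j"
      and via: "v k \<le> mpow A t a c * mpow A (k * q + j - t) c b"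
      using mpow_le_drop_critical_or_via_critical[OF A, of "k * q + j" a b] \<open>e k < v k\<close>
      unfolding v_def e_def by auto
    have "(k' - k) * q + k * q = k' * q"
      using \<open>k \<le> k'\<close> by (metis add_mult_distrib le_add_diff_inverse2)
    then have len: "t + (k' - k) * q + (k * q + j - t) = k' * q + j" using t by linarith
    have "\<forall>l\<in>{1..CARD('n)}. l dvd (k' - k) * q" using dvd by simp
    from mpow_critical_detour[OF A c this, of t a "k * q + j - t" b]
    show ?thesis using via unfolding len v_def by linarith
  qed
  moreover have "Bseq v"
  proof -
    obtain M where "1 \<le> M" "\<forall>a b. A a b \<le> M" using mat_entry_bound by blast
    then have "norm (v k) \<le> M ^ CARD('n)" for k
      using mpow_bounded[OF A _ _ mu] mpow_nonneg[OF A] by (simp add: v_def)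
    then show ?thesis by (rule BseqI')
  qed
  moreover have "0 \<le> v k" "0 \<le> e k" for k
    unfolding v_def e_def by (simp_all add: mpow_nonneg A nonneg_mat_drop_critical)
  ultimately have "convergent v"
    by (intro convergent_if_mono_above_null[of v e]) auto
  then show ?thesis by (simp add: v_def[abs_def])
qed

section \<open>Products of commuting matrices\<close>

lemma mpow_mmult_commute:
  assumes X: "nonneg_mat X" and Y: "nonneg_mat Y" and c: "X \<otimes>\<^sub>m Y = Y \<otimes>\<^sub>m X"
  shows "mpow X k \<otimes>\<^sub>m Y = Y \<otimes>\<^sub>m mpow X k"
proof (induction k)
  case 0 then show ?case by (simp add: mone_mmult[OF Y] mmult_mone[OF Y])
next
  case (Suc k)
  have X': "nonneg_mat (mpow X k)" by (rule nonneg_mat_mpow[OF X])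
  have "mpow X (Suc k) \<otimes>\<^sub>m Y = mpow X k \<otimes>\<^sub>m (Y \<otimes>\<^sub>m X)"
    by (simp add: mmult_assoc[OF X' Y] c)
  also have "\<dots> = Y \<otimes>\<^sub>m mpow X (Suc k)"
    by (simp add: mmult_assoc[OF X' X, symmetric] mmult_assoc[OF Y X] Suc)
  finally show ?case .
qed

lemma mpow_commute:
  assumes X: "nonneg_mat X" and Y: "nonneg_mat Y" and c: "X \<otimes>\<^sub>m Y = Y \<otimes>\<^sub>m X"
  shows "mpow X k \<otimes>\<^sub>m mpow Y l = mpow Y l \<otimes>\<^sub>m mpow X k"
  using mpow_mmult_commute[OF Y nonneg_mat_mpow[OF X] mpow_mmult_commute[OF X Y c, symmetric]]
  by simp

lemma mmult_interchange:
  assumes "nonneg_mat X" "nonneg_mat Y" "nonneg_mat X'" "nonneg_mat Y'"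
    and c: "Y \<otimes>\<^sub>m X' = X' \<otimes>\<^sub>m Y"
  shows "(X \<otimes>\<^sub>m Y) \<otimes>\<^sub>m (X' \<otimes>\<^sub>m Y') = (X \<otimes>\<^sub>m X') \<otimes>\<^sub>m (Y \<otimes>\<^sub>m Y')"
proof -
  have "(X \<otimes>\<^sub>m Y) \<otimes>\<^sub>m (X' \<otimes>\<^sub>m Y') = X \<otimes>\<^sub>m ((Y \<otimes>\<^sub>m X') \<otimes>\<^sub>m Y')"
    using assms(1-4) by (simp add: mmult_assoc nonneg_mat_mmult)
  also have "\<dots> = X \<otimes>\<^sub>m ((X' \<otimes>\<^sub>m Y) \<otimes>\<^sub>m Y')" by (simp only: c)
  also have "\<dots> = (X \<otimes>\<^sub>m X') \<otimes>\<^sub>m (Y \<otimes>\<^sub>m Y')"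
    using assms(1-4) by (simp add: mmult_assoc nonneg_mat_mmult)
  finally show ?thesis .
qed

lemma mprod_list_snoc [simp]: "mprod_list (Xs @ [X]) = mprod_list Xs \<otimes>\<^sub>m X"
  by (simp add: mprod_list_def)

lemma nonneg_mat_mprod_list: "\<forall>X\<in>set Xs. nonneg_mat X \<Longrightarrow> nonneg_mat (mprod_list Xs)"
  by (induction Xs rule: rev_induct)
    (auto simp: mprod_list_def nonneg_mat_mone intro: nonneg_mat_mmult)

lemma mprod_list_commute:
  assumes "\<forall>X\<in>set Xs. nonneg_mat X" and Z: "nonneg_mat Z"
    and "\<forall>X\<in>set Xs. Z \<otimes>\<^sub>m X = X \<otimes>\<^sub>m Z"
  shows "Z \<otimes>\<^sub>m mprod_list Xs = mprod_list Xs \<otimes>\<^sub>m Z"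
  using assms(1,3)
proof (induction Xs rule: rev_induct)
  case Nil then show ?case by (simp add: mprod_list_def mone_mmult[OF Z] mmult_mone[OF Z])
next
  case (snoc X Xs)
  let ?P = "mprod_list Xs"
  have P: "nonneg_mat ?P" and X: "nonneg_mat X" using snoc by (simp_all add: nonneg_mat_mprod_list)
  have "Z \<otimes>\<^sub>m (?P \<otimes>\<^sub>m X) = (Z \<otimes>\<^sub>m ?P) \<otimes>\<^sub>m X" by (rule mmult_assoc[OF Z X, symmetric])
  also have "\<dots> = ?P \<otimes>\<^sub>m (Z \<otimes>\<^sub>m X)" using snoc by (simp add: mmult_assoc[OF P X])
  also have "\<dots> = (?P \<otimes>\<^sub>m X) \<otimes>\<^sub>m Z" using snoc by (simp add: mmult_assoc[OF P Z])
  finally show ?case by simp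
qed

definition mmonomial :: "(nat \<Rightarrow> ('n::finite) mat) \<Rightarrow> nat list \<Rightarrow> (nat \<Rightarrow> nat) \<Rightarrow> 'n mat" where
  "mmonomial A is e = mprod_list (map (\<lambda>i. mpow (A i) (e i)) is)"

lemma mmonomial_Nil [simp]: "mmonomial A [] e = mone"
  by (simp add: mmonomial_def mprod_list_def)

lemma mmonomial_snoc [simp]: "mmonomial A (is @ [i]) e = mmonomial A is e \<otimes>\<^sub>m mpow (A i) (e i)"
  by (simp add: mmonomial_def)

lemma nonneg_mat_mmonomial: "\<forall>i\<in>set is. nonneg_mat (A i) \<Longrightarrow> nonneg_mat (mmonomial A is e)"
  unfolding mmonomial_def by (intro nonneg_mat_mprod_list) (auto intro: nonneg_mat_mpow)

lemma mmonomial_cong: "\<forall>i\<in>set is. e i = e' i \<Longrightarrow> mmonomial A is e = mmonomial A is e'"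
  unfolding mmonomial_def by (metis (mono_tags, lifting) map_eq_conv)

lemma mmonomial_zero: "\<forall>i\<in>set is. e i = 0 \<Longrightarrow> mmonomial A is e = mone"
  by (induction "is" rule: rev_induct) (auto simp: mone_mmult nonneg_mat_mone)

lemma mmonomial_add:
  assumes nonneg: "\<forall>i\<in>set is. nonneg_mat (A i)"
    and comm: "\<forall>r\<in>set is. \<forall>s\<in>set is. A r \<otimes>\<^sub>m A s = A s \<otimes>\<^sub>m A r"
  shows "mmonomial A is e \<otimes>\<^sub>m mmonomial A is e' = mmonomial A is (\<lambda>i. e i + e' i)"
  using assms
proof (induction "is" rule: rev_induct)
  case Nil then show ?case by (simp add: mone_mmult nonneg_mat_mone)
next
  case (snoc i "is")
  have "mpow (A i) (e i) \<otimes>\<^sub>m mmonomial A is e' = mmonomial A is e' \<otimes>\<^sub>m mpow (A i) (e i)"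
    unfolding mmonomial_def using snoc.prems
    by (intro mprod_list_commute) (auto intro: nonneg_mat_mpow mpow_commute)
  with snoc show ?case
    by (simp add: mmult_interchange nonneg_mat_mmonomial nonneg_mat_mpow mpow_add)
qed

lemma mmonomial_single:
  assumes "distinct is" "x \<in> set is" "\<forall>i\<in>set is. nonneg_mat (A i)"
  shows "mmonomial A is (\<lambda>i. if i = x then 1 else 0) = A x"
  using assms
proof (induction "is" rule: rev_induct)
  case (snoc i "is")
  show ?case
  proof (cases "i = x")
    case True
    then have "mmonomial A is (\<lambda>i. if i = x then 1 else 0) = mone"
      using snoc by (intro mmonomial_zero) auto
    then show ?thesis using True snoc by (simp add: mone_mmult mpow_1)
  next
    case False
    then show ?thesis using snoc by (simp add: mmult_mone)
  qed
qed simp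

lemma word_mat_eq_mmonomial:
  assumes "distinct is" "set w \<subseteq> set is" and nonneg: "\<forall>i\<in>set is. nonneg_mat (A i)"
    and comm: "\<forall>r\<in>set is. \<forall>s\<in>set is. A r \<otimes>\<^sub>m A s = A s \<otimes>\<^sub>m A r"
  shows "word_mat A w = mmonomial A is (count_list w)"
  using assms(2)
proof (induction w)
  case Nil then show ?case by (simp add: mmonomial_zero)
next
  case (Cons x w)
  then have "word_mat A (x # w) =
      mmonomial A is (count_list w) \<otimes>\<^sub>m mmonomial A is (\<lambda>i. if i = x then 1 else 0)"
    using mmonomial_single[OF assms(1) _ nonneg] by simp
  also have "\<dots> = mmonomial A is (\<lambda>i. count_list w i + (if i = x then 1 else 0))"
    by (rule mmonomial_add[OF nonneg comm])
  also have "\<dots> = mmonomial A is (count_list (x # w))"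
    by (rule mmonomial_cong) simp
  finally show ?case .
qed

lemma mpow_mmonomial:
  assumes nonneg: "\<forall>i\<in>set is. nonneg_mat (A i)"
    and comm: "\<forall>r\<in>set is. \<forall>s\<in>set is. A r \<otimes>\<^sub>m A s = A s \<otimes>\<^sub>m A r"
  shows "mpow (mmonomial A is e) m = mmonomial (\<lambda>i. mpow (A i) m) is e"
proof -
  have "mpow (mmonomial A is e) m = mmonomial A is (\<lambda>i. e i * m)"
  proof (induction m)
    case (Suc m)
    then have "mpow (mmonomial A is e) (Suc m) = mmonomial A is (\<lambda>i. e i * m) \<otimes>\<^sub>m mmonomial A is e"
      by simp
    also have "\<dots> = mmonomial A is (\<lambda>i. e i * m + e i)" by (rule mmonomial_add[OF nonneg comm])
    also have "\<dots> = mmonomial A is (\<lambda>i. e i * Suc m)" by (rule mmonomial_cong) simp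
    finally show ?case .
  qed (simp add: mmonomial_zero)
  also have "\<dots> = mmonomial (\<lambda>i. mpow (A i) m) is e"
    unfolding mmonomial_def using nonneg
    by (intro arg_cong[where f = mprod_list] map_cong refl) (metis mpow_mult mult.commute)
  finally show ?thesis .
qed

section \<open>Entrywise limits\<close>

lemma tendsto_Max_finite:
  fixes f :: "'i \<Rightarrow> 'a \<Rightarrow> 'b::linorder_topology"
  assumes "finite S" "S \<noteq> {}" "\<And>c. c \<in> S \<Longrightarrow> ((\<lambda>x. f x c) \<longlongrightarrow> l c) F"
  shows "((\<lambda>x. Max (f x ` S)) \<longlongrightarrow> Max (l ` S)) F"
  using assms
proof (induction S rule: finite_ne_induct)
  case (insert c S)
  then have "((\<lambda>x. max (f x c) (Max (f x ` S))) \<longlongrightarrow> max (l c) (Max (l ` S))) F"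
    by (intro tendsto_max) auto
  then show ?case using insert by simp
qed simp

lemma mconv_mmult: "mconv X L \<Longrightarrow> mconv Y M \<Longrightarrow> mconv (\<lambda>k. X k \<otimes>\<^sub>m Y k) (L \<otimes>\<^sub>m M)"
  unfolding mconv_def mmult_def by (intro allI tendsto_Max_finite tendsto_mult) auto

lemma mconv_const: "mconv (\<lambda>k. X) X"
  unfolding mconv_def by simp

lemma mconv_mpow: "mconv X L \<Longrightarrow> mconv (\<lambda>k. mpow (X k) m) (mpow L m)"
  by (induction m) (auto simp: mconv_const intro: mconv_mmult)

lemma mconv_mmonomial:
  "(\<And>i. i \<in> set is \<Longrightarrow> mconv (\<lambda>k. X k i) (L i)) \<Longrightarrow>
    mconv (\<lambda>k. mmonomial (X k) is e) (mmonomial L is e)"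
  by (induction "is" rule: rev_induct) (auto simp: mconv_const intro!: mconv_mmult mconv_mpow)

theorem theorem3p2:
  fixes A :: "nat \<Rightarrow> ('n::finite) mat" and N p :: nat and w :: "nat list"
  assumes nonneg: "\<forall>i\<in>{1..N}. nonneg_mat (A i)"
    and comm: "\<forall>r\<in>{1..N}. \<forall>s\<in>{1..N}. A r \<otimes>\<^sub>m A s = A s \<otimes>\<^sub>m A r"
    and mu: "\<forall>i\<in>{1..N}. mcgm (A i) \<le> 1"
    and len: "length w = p"
    and word: "set w \<subseteq> {1..N}"
  shows "\<exists>q::nat. 0 < q \<and> (\<forall>j\<in>{1..q}. \<exists>L :: nat \<Rightarrow> 'n mat.
           (\<forall>i\<in>{1..N}. mconv (\<lambda>k. mpow (A i) (k * q + j)) (L i)) \<and>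
           mconv (\<lambda>k. mpow (word_mat A w) (k * q + j))
                 (mprod_list (map (\<lambda>i. mpow (L i) (count_list w i)) [1..<N+1])))"
proof -
  define q :: nat where "q = fact CARD('n)"
  have "\<exists>L. (\<forall>i\<in>{1..N}. mconv (\<lambda>k. mpow (A i) (k * q + j)) (L i)) \<and>
      mconv (\<lambda>k. mpow (word_mat A w) (k * q + j))
        (mprod_list (map (\<lambda>i. mpow (L i) (count_list w i)) [1..<N+1]))" for j
  proof -
    define L where "L i a b = lim (\<lambda>k. mpow (A i) (k * q + j) a b)" for i a b
    have L: "\<forall>i\<in>{1..N}. mconv (\<lambda>k. mpow (A i) (k * q + j)) (L i)"
      using mpow_arith_progression_convergent[of "A _" q j] nonneg mu dvd_fact
      by (auto simp: mconv_def L_def q_def convergent_LIMSEQ_iff)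
    define "is" where "is = [1..<N+1]"
    have "set is = {1..N}" "distinct is" by (auto simp: is_def)
    then have "mpow (word_mat A w) m = mmonomial (\<lambda>i. mpow (A i) m) is (count_list w)" for m
      using word_mat_eq_mmonomial[of "is" w A] mpow_mmonomial[of "is" A] nonneg comm word by simp
    moreover have "mconv (\<lambda>k. mmonomial (\<lambda>i. mpow (A i) (k * q + j)) is (count_list w))
        (mmonomial L is (count_list w))"
      using L \<open>set is = {1..N}\<close> by (intro mconv_mmonomial) auto
    ultimately show ?thesis using L unfolding mmonomial_def is_def by auto
  qed
  then show ?thesis by (intro exI[of _ q]) (simp add: q_def)
qed

end
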